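(* Let $V=\bigoplus_{n\in\mathbb{Z}}V_n$ be an $\mathcal{H}$-module vertex algebra such that $V_n=0$ for $n<0$. Suppose $(\cdot,\cdot)$ is a bilinear form on $V$ such that $(Y(v,z)w,w')=(w,Y(e^{zL_1}(-z^{-2})^{\deg}v,z^{-1})w')$ for all $v,w,w'\in V$, and $(V_m,V_n)=0$ for all $m\ne n$. Then $(\cdot,\cdot)$ is symmetric.
   Context: Throughout, $\mathbb{F}$ is an algebraically closed field of odd prime characteristic $p$; vertex algebras are over $\mathbb{F}$. Every vertex algebra $V$ is a module for the bialgebra $\mathcal{B}$ with basis $\{\mathcal{D}^{(n)}\}_{n\in\mathbb{N}}$, $\mathcal{D}^{(m)}\mathcal{D}^{(n)}=\binom{m+n}{n}\mathcal{D}^{(m+n)}$, via $\mathcal{D}^{(n)}v=v_{-n-1}\mathbf{1}$. $\mathcal{H}$: let $\mathfrak{sl}_2$ over $\mathbb{C}$ have basis $L_{-1},L_0,L_1$ with $[L_1,L_{-1}]=2L_0$, $[L_0,L_{\pm1}]=\mp L_{\pm1}$; put $L_{\pm1}^{(n)}=L_{\pm1}^n/n!$, $L_0^{(n)}=\binom{-2L_0}{n}$ in $U(\mathfrak{sl}_2)$; $U(\mathfrak{sl}_2)_{\mathbb{Z}}$ is the $\mathbb{Z}$-span of the $L_{-1}^{(i)}L_0^{(j)}L_1^{(k)}$, and $\mathcal{H}=\mathbb{F}\otimes_{\mathbb{Z}}U(\mathfrak{sl}_2)_{\mathbb{Z}}$. $e^{zL_{\pm1}}=\sum_{n\ge0}z^nL_{\pm1}^{(n)}$.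 For $v$ homogeneous of degree $n$, $f(z)^{\deg}v:=f(z)^nv$, extended linearly. A $\mathbb{Z}$-graded vertex algebra: $V=\bigoplus V_n$, $\mathbf{1}\in V_0$, $u_rV_n\subset V_{m+n-r-1}$ for $u\in V_m$. A $\mathbb{Z}$-graded weight $\mathcal{H}$-module: $W=\bigoplus W_n$ with $\mathcal{H}$-action, $L_{\pm1}^{(r)}W_n\subset W_{n\mp r}$, $L_0^{(r)}|_{W_n}=\binom{-2n}{r}$. An $\mathcal{H}$-module vertex algebra: a $\mathbb{Z}$-graded vertex algebra $V$ which is a $\mathbb{Z}$-graded weight $\mathcal{H}$-module with $L_{-1}^{(n)}=\mathcal{D}^{(n)}$, such that $V_n=0$ for $n\ll0$, $L_1^{(n)}\mathbf{1}=\delta_{n,0}\mathbf{1}$, and $e^{zL_1}Y(v,z_0)e^{-zL_1}=Y\bigl(e^{z(1-zz_0)L_1}(1-zz_0)^{-2\deg}v,z_0/(1-zz_0)\bigr)$ for $v\in V$. *)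

theory Defs
  imports "HOL-Computational_Algebra.Polynomial"
begin

text \<open>Binomial coefficient with integer top, as an integer (then mapped into the field by of_int):
  m(m-1)...(m-k+1)/k!, the division being exact.\<close>
definition ibinom :: "int \<Rightarrow> nat \<Rightarrow> int" where
  "ibinom m k = (\<Prod>i<k. m - int i) div fact k"

definition graded_space :: "('a::field \<Rightarrow> 'v::ab_group_add \<Rightarrow> 'v) \<Rightarrow> (int \<Rightarrow> 'v set) \<Rightarrow> bool" where
  "graded_space sm Vg \<longleftrightarrow>
     (\<forall>n. module.subspace sm (Vg n)) \<and>
     (\<forall>v. \<exists>!c :: int \<Rightarrow> 'v. finite {n. c n \<noteq> 0} \<and> (\<forall>n. c n \<in> Vg n) \<and> v = sum c {n. c n \<noteq> 0})"

text \<open>Vertex algebra over the field: Y u n w is the mode u_n w; vac is the vacuum.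
  Truncation, vacuum and creation properties, and the Borcherds (Jacobi) identity
  (sums over i \<ge> 0 are truncated at any N beyond which all terms vanish).\<close>
definition vertex_algebra ::
  "('a::field \<Rightarrow> 'v::ab_group_add \<Rightarrow> 'v) \<Rightarrow> 'v \<Rightarrow> ('v \<Rightarrow> int \<Rightarrow> 'v \<Rightarrow> 'v) \<Rightarrow> bool" where
  "vertex_algebra sm vac Y \<longleftrightarrow>
     vector_space sm \<and>
     (\<forall>u n. Vector_Spaces.linear sm sm (Y u n)) \<and>
     (\<forall>n w. Vector_Spaces.linear sm sm (\<lambda>u. Y u n w)) \<and>
     (\<forall>u w. \<exists>N. \<forall>n\<ge>N. Y u n w = 0) \<and>
     (\<forall>n w. Y vac n w = (if n = -1 then w else 0)) \<and>
     (\<forall>v. Y v (-1) vac = v) \<and>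
     (\<forall>v n. n \<ge> 0 \<longrightarrow> Y v n vac = 0) \<and>
     (\<forall>u v w l m n (N::nat).
        (\<forall>i\<ge>N. Y u (l + int i) v = 0 \<and> Y v (n + int i) w = 0 \<and> Y u (m + int i) w = 0) \<longrightarrow>
        (\<Sum>i<N. sm (of_int (ibinom m i)) (Y (Y u (l + int i) v) (m + n - int i) w)) =
        (\<Sum>i<N. sm ((-1) ^ i * of_int (ibinom l i))
                  (Y u (m + l - int i) (Y v (n + int i) w)
                   - sm ((-1) powi l) (Y v (n + l - int i) (Y u (m + int i) w)))))"

text \<open>Z-graded weight H-module, H = F \<otimes> U(sl2)_Z (Kostant Z-form).  Lm r is the action of
  L_{-1}^{(r)}, Lp r that of L_1^{(r)}; L_0^{(r)} acts on Vg n by binom(-2n, r), so it is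
  determined by the grading.  The module axioms are the defining relations of the Z-form on
  weight spaces: divided-power relations and the commutation formula
  L_1^{(a)} L_{-1}^{(b)} = sum_t (-1)^t binom(-2L_0 + a - b, t) L_{-1}^{(b-t)} L_1^{(a-t)}
  (which is e^{(a)} f^{(b)} = sum_t f^{(b-t)} binom(h-a-b+2t,t) e^{(a-t)} for
  e = L_1, f = -L_{-1}, h = -2 L_0).\<close>
definition graded_weight_H_module ::
  "('a::field \<Rightarrow> 'v::ab_group_add \<Rightarrow> 'v) \<Rightarrow> (int \<Rightarrow> 'v set) \<Rightarrow> (nat \<Rightarrow> 'v \<Rightarrow> 'v) \<Rightarrow> (nat \<Rightarrow> 'v \<Rightarrow> 'v) \<Rightarrow> bool" where
  "graded_weight_H_module sm Vg Lm Lp \<longleftrightarrow>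
     vector_space sm \<and> graded_space sm Vg \<and>
     (\<forall>r. Vector_Spaces.linear sm sm (Lm r) \<and> Vector_Spaces.linear sm sm (Lp r)) \<and>
     (\<forall>r n v. v \<in> Vg n \<longrightarrow> Lm r v \<in> Vg (n + int r) \<and> Lp r v \<in> Vg (n - int r)) \<and>
     (\<forall>v. Lm 0 v = v \<and> Lp 0 v = v) \<and>
     (\<forall>a b v. Lm a (Lm b v) = sm (of_nat (a + b choose b)) (Lm (a + b) v)) \<and>
     (\<forall>a b v. Lp a (Lp b v) = sm (of_nat (a + b choose b)) (Lp (a + b) v)) \<and>
     (\<forall>a b n v. v \<in> Vg n \<longrightarrow>
        Lp a (Lm b v) =
        (\<Sum>t\<le>min a b. sm ((-1) ^ t * of_int (ibinom (-2 * n + int a - int b) t))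
                         (Lm (b - t) (Lp (a - t) v))))"

text \<open>The conjugation formula
  e^{zL_1} Y(v,z0) e^{-zL_1} = Y(e^{z(1-z z0)L_1}(1-z z0)^{-2 deg} v, z0/(1-z z0))
  is stated coefficientwise: for v homogeneous of degree d, the coefficient of
  z^M z0^{-s-1} applied to w.\<close>
definition H_module_VA ::
  "('a::field \<Rightarrow> 'v::ab_group_add \<Rightarrow> 'v) \<Rightarrow> 'v \<Rightarrow> ('v \<Rightarrow> int \<Rightarrow> 'v \<Rightarrow> 'v) \<Rightarrow> (int \<Rightarrow> 'v set)
     \<Rightarrow> (nat \<Rightarrow> 'v \<Rightarrow> 'v) \<Rightarrow> (nat \<Rightarrow> 'v \<Rightarrow> 'v) \<Rightarrow> bool" where
  "H_module_VA sm vac Y Vg Lm Lp \<longleftrightarrow>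
     vertex_algebra sm vac Y \<and>
     graded_weight_H_module sm Vg Lm Lp \<and>
     vac \<in> Vg 0 \<and>
     (\<forall>m n r u w. u \<in> Vg m \<longrightarrow> w \<in> Vg n \<longrightarrow> Y u r w \<in> Vg (m + n - r - 1)) \<and>
     (\<forall>n v. Lm n v = Y v (- int n - 1) vac) \<and>
     (\<exists>N. \<forall>n<N. Vg n = {0}) \<and>
     (\<forall>n. Lp n vac = (if n = 0 then vac else 0)) \<and>
     (\<forall>d v M s w. v \<in> Vg d \<longrightarrow>
        (\<Sum>a\<le>M. sm ((-1) ^ (M - a)) (Lp a (Y v s (Lp (M - a) w)))) =
        (\<Sum>j\<le>M. sm ((-1) ^ j * of_int (ibinom (int M + s + 1 - 2 * d) j))
                     (Y (Lp (M - j) v) (s + int j) w)))"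

definition bilinear_form :: "('a::field \<Rightarrow> 'v::ab_group_add \<Rightarrow> 'v) \<Rightarrow> ('v \<Rightarrow> 'v \<Rightarrow> 'a) \<Rightarrow> bool" where
  "bilinear_form sm B \<longleftrightarrow>
     (\<forall>w. Vector_Spaces.linear sm (*) (\<lambda>u. B u w)) \<and>
     (\<forall>u. Vector_Spaces.linear sm (*) (\<lambda>w. B u w))"

end

theory Submission
  imports Defs
begin

text \<open>Write \<open>u = u_(-1) \<one>\<close>.  Invariance moves \<open>u_(-1)\<close> across the form: for \<open>u, w\<close> of
  degree \<open>d\<close>, \<open>(u, w) = (-1)^d \<Sum>_k (\<one>, (L_1^(k) u)_(2d-1-k) w)\<close>.  Invariance applied to
  \<open>y_(a-1) \<one> = 0\<close> also gives \<open>(\<one>, L_1^(a) y) = 0\<close> for \<open>a \<ge> 1\<close>, so the conjugation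
  formula for \<open>e^(z L_1)\<close> moves \<open>L_1^(k)\<close> from \<open>u\<close> onto \<open>w\<close> at the cost of a sign \<open>(-1)^k\<close>.
  Skew symmetry of the top mode, \<open>a_(p+q-1) b = (-1)^(p+q) b_(p+q-1) a\<close> for \<open>a \<in> V_p\<close>,
  \<open>b \<in> V_q\<close> (a consequence of the Borcherds identity because \<open>V\<close> has no negative degrees),
  turns the result into the expansion of \<open>(w, u)\<close>.  Orthogonality of distinct degrees extends
  symmetry to all of \<open>V\<close>.  No division occurs.\<close>

lemma linear_map_zero: "Vector_Spaces.linear s1 s2 f \<Longrightarrow> f 0 = 0"
  by (rule module_hom.zero[OF Vector_Spaces.linear.axioms(3)])

lemma linear_map_scale: "Vector_Spaces.linear s1 s2 f \<Longrightarrow> f (s1 c x) = s2 c (f x)"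
  by (rule module_hom.scale[OF Vector_Spaces.linear.axioms(3)])

lemma linear_map_sum: "Vector_Spaces.linear s1 s2 f \<Longrightarrow> f (sum g S) = (\<Sum>a\<in>S. f (g a))"
  by (rule module_hom.sum[OF Vector_Spaces.linear.axioms(3)])

lemma ibinom_0_right [simp]: "ibinom m 0 = 1"
  by (simp add: ibinom_def)

lemma ibinom_0_left: "ibinom 0 j = (if j = 0 then 1 else 0)"
proof (cases "j = 0")
  case False
  hence "(\<Prod>i<j. (0::int) - int i) = 0" by (intro prod_zero) auto
  thus ?thesis unfolding ibinom_def using False by (simp only:) simp
qed simp

lemma sum_atMost_only_0:
  "(\<And>a. a \<le> k \<Longrightarrow> a \<noteq> 0 \<Longrightarrow> f a = 0) \<Longrightarrow> sum f {..(k::nat)} = (f 0 :: 'b::comm_monoid_add)"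
  by (subst sum.remove[of _ 0]) (auto intro!: sum.neutral)

lemma bilinear_form_symmetric_from_graded_pieces:
  assumes "graded_space sm Vg" and "bilinear_form sm B"
    and orth: "\<And>m n u w. m \<noteq> n \<Longrightarrow> u \<in> Vg m \<Longrightarrow> w \<in> Vg n \<Longrightarrow> B u w = 0"
    and sym: "\<And>d u w. u \<in> Vg d \<Longrightarrow> w \<in> Vg d \<Longrightarrow> B u w = B w u"
  shows "B u w = B w u"
proof -
  from assms(2) have left: "\<And>w. Vector_Spaces.linear sm (*) (\<lambda>u. B u w)"
    and right: "\<And>u. Vector_Spaces.linear sm (*) (\<lambda>w. B u w)"
    unfolding bilinear_form_def by blast+
  have "\<exists>c. finite {n. c n \<noteq> 0} \<and> (\<forall>n. c n \<in> Vg n) \<and> v = sum c {n. c n \<noteq> 0}" for v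
    using assms(1) unfolding graded_space_def by (meson ex1_implies_ex)
  then obtain c e where c: "\<And>n. c n \<in> Vg n" "u = sum c {n. c n \<noteq> 0}"
    and e: "\<And>n. e n \<in> Vg n" "w = sum e {n. e n \<noteq> 0}"
    by meson
  have pieces: "B (c m) (e n) = B (e n) (c m)" for m n
    using orth sym c(1) e(1) by (cases "m = n") metis+
  have "B u w = (\<Sum>m\<in>{m. c m \<noteq> 0}. \<Sum>n\<in>{n. e n \<noteq> 0}. B (c m) (e n))"
    unfolding c(2) e(2) linear_map_sum[OF left] linear_map_sum[OF right] by (rule sum.swap)
  also have "\<dots> = (\<Sum>n\<in>{n. e n \<noteq> 0}. \<Sum>m\<in>{m. c m \<noteq> 0}. B (e n) (c m))"
    by (subst sum.swap) (simp add: pieces)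
  also have "\<dots> = B w u"
    unfolding c(2) e(2) linear_map_sum[OF left] linear_map_sum[OF right] by (rule sum.swap)
  finally show ?thesis .
qed

locale nonneg_H_module_VA =
  fixes sm :: "'a::field \<Rightarrow> 'v::ab_group_add \<Rightarrow> 'v"
    and vac :: 'v and Y :: "'v \<Rightarrow> int \<Rightarrow> 'v \<Rightarrow> 'v" and Vg :: "int \<Rightarrow> 'v set"
    and Lm Lp :: "nat \<Rightarrow> 'v \<Rightarrow> 'v"
  assumes H_module_VA: "H_module_VA sm vac Y Vg Lm Lp"
    and nonneg: "\<forall>n<0. Vg n = {0}"
begin

lemma vertex_algebra: "vertex_algebra sm vac Y"
  using H_module_VA unfolding H_module_VA_def by blast

lemma Y_degree: "u \<in> Vg m \<Longrightarrow> w \<in> Vg n \<Longrightarrow> Y u r w \<in> Vg (m + n - r - 1)"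
  using H_module_VA unfolding H_module_VA_def by blast

lemma graded_weight_H_module: "graded_weight_H_module sm Vg Lm Lp"
  using H_module_VA unfolding H_module_VA_def by blast

lemma Lp_degree: "v \<in> Vg n \<Longrightarrow> Lp r v \<in> Vg (n - int r)"
  using graded_weight_H_module unfolding graded_weight_H_module_def by blast

lemma Lp_0: "Lp 0 v = v"
  using graded_weight_H_module unfolding graded_weight_H_module_def by blast

lemma graded_space: "graded_space sm Vg"
  using graded_weight_H_module unfolding graded_weight_H_module_def by blast

lemma conjugation:
  "v \<in> Vg d \<Longrightarrow>
     (\<Sum>a\<le>M. sm ((-1) ^ (M - a)) (Lp a (Y v s (Lp (M - a) w)))) =
     (\<Sum>j\<le>M. sm ((-1) ^ j * of_int (ibinom (int M + s + 1 - 2 * d) j))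
                 (Y (Lp (M - j) v) (s + int j) w))"
  using H_module_VA unfolding H_module_VA_def by blast

lemma vector_space: "vector_space sm"
  using vertex_algebra unfolding vertex_algebra_def by blast

lemma scale_one: "sm 1 x = x"
  using vector_space by (simp add: vector_space_def module.scale_one)

lemma Y_linear_left: "Vector_Spaces.linear sm sm (\<lambda>u. Y u n w)"
  using vertex_algebra unfolding vertex_algebra_def by blast

lemma creation: "Y v (-1) vac = v"
  using vertex_algebra unfolding vertex_algebra_def by blast

lemma vacuum_mode_nonneg: "n \<ge> 0 \<Longrightarrow> Y v n vac = 0"
  using vertex_algebra unfolding vertex_algebra_def by blast

lemma Borcherds_identity:
  "\<forall>i\<ge>N. Y u (l + int i) v = 0 \<and> Y v (n + int i) w = 0 \<and> Y u (m + int i) w = 0 \<Longrightarrow>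
    (\<Sum>i<N. sm (of_int (ibinom m i)) (Y (Y u (l + int i) v) (m + n - int i) w)) =
    (\<Sum>i<N. sm ((-1) ^ i * of_int (ibinom l i))
              (Y u (m + l - int i) (Y v (n + int i) w)
               - sm ((-1) powi l) (Y v (n + l - int i) (Y u (m + int i) w))))"
  using vertex_algebra unfolding vertex_algebra_def by blast

lemma Y_zero_left: "Y 0 n w = 0"
  using linear_map_zero[OF Y_linear_left] by simp

lemma graded_piece_negative: "n < 0 \<Longrightarrow> x \<in> Vg n \<Longrightarrow> x = 0"
  using nonneg by blast

lemma Y_top_mode_skew:
  assumes a: "a \<in> Vg p" and b: "b \<in> Vg q"
  shows "Y a (p + q - 1) b = sm ((-1) powi (p + q)) (Y b (p + q - 1) a)"
proof -
  have above_top: "Y a (p + q + int i) b = 0" for i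
    by (rule graded_piece_negative[OF _ Y_degree[OF a b]]) simp
  have "\<forall>i\<ge>1. Y a (p + q + int i) b = 0 \<and> Y b (-1 + int i) vac = 0 \<and> Y a (-1 + int i) vac = 0"
    using above_top vacuum_mode_nonneg by auto
  \<comment> \<open>the Borcherds identity for \<open>(a, b, \<one>)\<close> with \<open>l = p + q\<close>, \<open>m = n = -1\<close>: only \<open>i = 0\<close> survives\<close>
  from Borcherds_identity[where u=a and v=b and w=vac and l="p + q" and m="-1" and n="-1" and N=1, OF this]
  have "Y (Y a (p + q) b) (-2) vac =
      Y a (p + q - 1) (Y b (-1) vac) - sm ((-1) powi (p + q)) (Y b (p + q - 1) (Y a (-1) vac))"
    by (simp add: scale_one add.commute)
  thus ?thesis
    using above_top[of 0] by (simp add: creation Y_zero_left)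
qed

end

locale invariant_bilinear_form = nonneg_H_module_VA +
  fixes B
  assumes bilinear: "bilinear_form sm B"
    and invariant: "\<forall>d v w w' n. v \<in> Vg d \<longrightarrow>
               B (Y v n w) w' =
               (-1) powi d * (\<Sum>k\<le>nat d. B w (Y (Lp k v) (2 * d - n - 2 - int k) w'))"
begin

lemma B_linear_left: "Vector_Spaces.linear sm (*) (\<lambda>u. B u w)"
  and B_linear_right: "Vector_Spaces.linear sm (*) (\<lambda>w. B u w)"
  using bilinear unfolding bilinear_form_def by blast+

lemma B_0_left [simp]: "B 0 w = 0"
  using linear_map_zero[OF B_linear_left] by simp

lemma B_0_right [simp]: "B u 0 = 0"
  using linear_map_zero[OF B_linear_right] by simp

lemma B_scale_right: "B u (sm c x) = c * B u x"
  using linear_map_scale[OF B_linear_right] by simp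

lemma B_sum_right: "B u (sum f S) = (\<Sum>a\<in>S. B u (f a))"
  using linear_map_sum[OF B_linear_right] by simp

lemma B_vacuum_Lp:
  assumes "1 \<le> a" and y: "y \<in> Vg (int a)"
  shows "B vac (Lp a y) = 0"
proof -
  \<comment> \<open>invariance applied to \<open>y\<^sub>a\<^sub>-\<^sub>1 \<one> = 0\<close>; on the right only the term \<open>k = a\<close> is not a
    non-negative mode on the vacuum\<close>
  have "B (Y y (int a - 1) vac) vac = (-1) powi (int a) *
      (\<Sum>k\<le>a. B vac (Y (Lp k y) (int a - 1 - int k) vac))"
    using invariant y by (simp add: algebra_simps)
  also have "(\<Sum>k\<le>a. B vac (Y (Lp k y) (int a - 1 - int k) vac)) = B vac (Lp a y)"
    using \<open>1 \<le> a\<close> by (cases a) (simp_all add: vacuum_mode_nonneg creation)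
  finally show ?thesis
    using vacuum_mode_nonneg[of "int a - 1" y] \<open>1 \<le> a\<close> by simp
qed

lemma B_vacuum_Lp_transpose:
  assumes u: "u \<in> Vg d" and w: "w \<in> Vg d"
  shows "B vac (Y (Lp k u) (2 * d - 1 - int k) w) = (-1) ^ k * B vac (Y u (2 * d - 1 - int k) (Lp k w))"
proof -
  define s where "s = 2 * d - 1 - int k"
  have lhs: "B vac (\<Sum>a\<le>k. sm ((-1) ^ (k - a)) (Lp a (Y u s (Lp (k - a) w))))
      = (-1) ^ k * B vac (Y u s (Lp k w))"
    unfolding B_sum_right B_scale_right
  proof (subst sum_atMost_only_0)
    fix a assume "a \<le> k" "a \<noteq> 0"
    have "Y u s (Lp (k - a) w) \<in> Vg (d + (d - int (k - a)) - s - 1)"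
      using Y_degree[OF u Lp_degree[OF w]] .
    also have "d + (d - int (k - a)) - s - 1 = int a"
      using \<open>a \<le> k\<close> by (simp add: s_def)
    finally show "(-1) ^ (k - a) * B vac (Lp a (Y u s (Lp (k - a) w))) = 0"
      using B_vacuum_Lp \<open>a \<noteq> 0\<close> by simp
  qed (simp add: Lp_0)
  have rhs: "B vac (\<Sum>j\<le>k. sm ((-1) ^ j * of_int (ibinom (int k + s + 1 - 2 * d) j))
      (Y (Lp (k - j) u) (s + int j) w)) = B vac (Y (Lp k u) s w)"
    unfolding B_sum_right B_scale_right
    by (subst sum_atMost_only_0) (auto simp: s_def ibinom_0_left)
  show ?thesis
    using conjugation[OF u, of k s w] lhs rhs by (simp add: s_def)
qed

lemma B_symmetric_homogeneous:
  assumes u: "u \<in> Vg d" and w: "w \<in> Vg d"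
  shows "B u w = B w u"
proof (cases "d < 0")
  case True
  thus ?thesis using graded_piece_negative u w by metis
next
  case False
  have expand: "B x y = (-1) powi d * (\<Sum>k\<le>nat d. B vac (Y (Lp k x) (2 * d - 1 - int k) y))"
    if "x \<in> Vg d" for x y
    using invariant[rule_format, OF that, of "-1" vac y] by (simp add: creation)
  have "B vac (Y (Lp k w) (2 * d - 1 - int k) u) = (-1) ^ k * B vac (Y u (2 * d - 1 - int k) (Lp k w))"
    for k
  proof -
    have "(d - int k) + d - 1 = 2 * d - 1 - int k" by simp
    moreover have "(-1::'a) powi ((d - int k) + d) = (-1) ^ k"
      by (simp add: power_int_minus_left minus_one_power_iff)
    ultimately have "Y (Lp k w) (2 * d - 1 - int k) u = sm ((-1) ^ k) (Y u (2 * d - 1 - int k) (Lp k w))"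
      using Y_top_mode_skew[OF Lp_degree[OF w] u] by metis
    thus ?thesis by (simp add: B_scale_right)
  qed
  thus ?thesis
    using expand[OF u, of w] expand[OF w, of u] B_vacuum_Lp_transpose[OF u w] by simp
qed

end

theorem lemma4p5:
  fixes sm :: "'a::alg_closed_field \<Rightarrow> 'v::ab_group_add \<Rightarrow> 'v"
    and vac :: 'v and Y :: "'v \<Rightarrow> int \<Rightarrow> 'v \<Rightarrow> 'v" and Vg :: "int \<Rightarrow> 'v set"
    and Lm Lp :: "nat \<Rightarrow> 'v \<Rightarrow> 'v" and B :: "'v \<Rightarrow> 'v \<Rightarrow> 'a" and p :: nat
  assumes char: "CHAR('a) = p" and "prime p" and "odd p"
    and HVA: "H_module_VA sm vac Y Vg Lm Lp"
    and neg: "\<forall>n<0. Vg n = {0}"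
    and bil: "bilinear_form sm B"
    and inv: "\<forall>d v w w' n. v \<in> Vg d \<longrightarrow>
               B (Y v n w) w' =
               (-1) powi d * (\<Sum>k\<le>nat d. B w (Y (Lp k v) (2 * d - n - 2 - int k) w'))"
    and orth: "\<forall>m n u w. m \<noteq> n \<longrightarrow> u \<in> Vg m \<longrightarrow> w \<in> Vg n \<longrightarrow> B u w = 0"
  shows "\<forall>u w. B u w = B w u"
proof -
  interpret invariant_bilinear_form sm vac Y Vg Lm Lp B
    by unfold_locales (fact HVA neg bil inv)+
  have "B u w = B w u" for u w
    by (rule bilinear_form_symmetric_from_graded_pieces[OF graded_space bil])
      (use orth B_symmetric_homogeneous in blast)+
  thus ?thesis by blast
qed

end
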